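(* Let $f$ be a (partial) function $A^\omega\to A^\omega$ realizable by a $1$-deterministic $2$-automaton. Then for every infinite word $x$ in the domain of $f$, $\rho(f(x)/x)=0$.
   Context: A $k$-automaton $\langle Q,A,\delta,I\rangle$ has finite state set $Q$, transitions $\delta\subseteq Q\times(A\cup\{\varepsilon\})^k\times Q$, initial states $I$; an infinite run is accepting if it starts in $I$ and all components of its label (componentwise concatenation of transition labels) are infinite. It is $\ell$-deterministic if $I$ is a singleton and, for two transitions from the same state with labels $(\alpha_i),(\alpha'_i)$, $\alpha_j=\varepsilon$ for some $j\le\ell$ implies $\alpha'_j=\varepsilon$, and $\alpha_i=\alpha'_i$ for all $i\le\ell$ implies equality of the remaining components and target states; it realizes the partial function mapping the first $\ell$ tapes to the remaining ones. A compressor is a $2$-deterministic $3$-automaton $\mathcal C$ (first input tape: the word $z$ to compress; second input tape: oracle $y$; third: output) such that for each fixed $y$ the map $z\mapsto\mathcal C(z,y)$ is injective. For the accepting run $q_0\xrightarrow{\alpha_1,\beta_1|w_1}q_1\xrightarrow{\alpha_2,\beta_2|w_2}\cdots$ with $z=\alpha_1\alpha_2\cdots$, $y=\beta_1\beta_2\cdots$, $\rho_{\mathcal C}(z/y)=\liminf_n|w_1\cdots w_n|/|\alpha_1\cdots\alpha_n|$, and $\rho(z/y)$ is the infimum of $\rho_{\mathcal C}(z/y)$ over all compressors. *)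

theory Defs
  imports Complex_Main "HOL-Library.Infinite_Set" "HOL-Library.Extended_Real"
          "HOL-Library.Liminf_Limsup"
begin

text \<open>A transition label in (A \<union> {\<epsilon>})^k is a list of length k of 'a option
  (None = \<epsilon>). Tapes are indexed 0..k-1 (paper: 1..k).\<close>

record ('q, 'a) kaut =
  states :: "'q set"
  trans  :: "('q \<times> 'a option list \<times> 'q) set"
  init   :: "'q set"

definition is_kaut :: "nat \<Rightarrow> ('q, 'a) kaut \<Rightarrow> bool" where
  "is_kaut k A \<longleftrightarrow> finite (states A) \<and> init A \<subseteq> states A \<and>
     (\<forall>(p, \<alpha>, q) \<in> trans A. p \<in> states A \<and> q \<in> states A \<and> length \<alpha> = k)"

definition is_run :: "('q, 'a) kaut \<Rightarrow> (nat \<Rightarrow> 'q) \<Rightarrow> (nat \<Rightarrow> 'a option list) \<Rightarrow> bool" where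
  "is_run A r l \<longleftrightarrow> r 0 \<in> init A \<and> (\<forall>n. (r n, l n, r (Suc n)) \<in> trans A)"

definition accepting_run :: "nat \<Rightarrow> ('q, 'a) kaut \<Rightarrow> (nat \<Rightarrow> 'q) \<Rightarrow> (nat \<Rightarrow> 'a option list) \<Rightarrow> bool" where
  "accepting_run k A r l \<longleftrightarrow> is_run A r l \<and> (\<forall>i<k. infinite {n. l n ! i \<noteq> None})"

text \<open>The i-th component of the label (concatenation of the i-th components),
  meaningful when it is infinite.\<close>
definition component :: "(nat \<Rightarrow> 'a option list) \<Rightarrow> nat \<Rightarrow> (nat \<Rightarrow> 'a)" where
  "component l i = (\<lambda>m. the (l (enumerate {n. l n ! i \<noteq> None} m) ! i))"

definition run_label :: "nat \<Rightarrow> (nat \<Rightarrow> 'a option list) \<Rightarrow> (nat \<Rightarrow> 'a) list" where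
  "run_label k l = map (component l) [0..<k]"

definition accepted :: "nat \<Rightarrow> ('q, 'a) kaut \<Rightarrow> (nat \<Rightarrow> 'a) list set" where
  "accepted k A = {ws. \<exists>r l. accepting_run k A r l \<and> ws = run_label k l}"

definition deterministic :: "nat \<Rightarrow> ('q, 'a) kaut \<Rightarrow> bool" where
  "deterministic m A \<longleftrightarrow> (\<exists>q0. init A = {q0}) \<and>
     (\<forall>p \<alpha> q \<alpha>' q'. (p, \<alpha>, q) \<in> trans A \<longrightarrow> (p, \<alpha>', q') \<in> trans A \<longrightarrow>
        (\<forall>j<m. \<alpha> ! j = None \<longrightarrow> \<alpha>' ! j = None) \<and>
        ((\<forall>i<m. \<alpha> ! i = \<alpha>' ! i) \<longrightarrow> drop m \<alpha> = drop m \<alpha>' \<and> q = q'))"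

definition realizes_1_2 :: "('q, 'a) kaut \<Rightarrow> ((nat \<Rightarrow> 'a) \<Rightarrow> (nat \<Rightarrow> 'a) option) \<Rightarrow> bool" where
  "realizes_1_2 A f \<longleftrightarrow> (\<forall>x y. f x = Some y \<longleftrightarrow> [x, y] \<in> accepted 2 A)"

text \<open>Compressors; state sets are taken inside nat (no loss of generality, finite).\<close>
definition compressor :: "(nat, 'a) kaut \<Rightarrow> bool" where
  "compressor C \<longleftrightarrow> is_kaut 3 C \<and> deterministic 2 C \<and>
     (\<forall>y z z' w. [z, y, w] \<in> accepted 3 C \<longrightarrow> [z', y, w] \<in> accepted 3 C \<longrightarrow> z = z')"

definition rho_run :: "(nat \<Rightarrow> 'a option list) \<Rightarrow> ereal" where
  "rho_run l = liminf (\<lambda>n. ereal (real (card {i. i < n \<and> l i ! 2 \<noteq> None})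
                                   / real (card {i. i < n \<and> l i ! 0 \<noteq> None})))"

text \<open>rho z y = \<rho>(z/y): infimum over compressors C (with their accepting run on (z,y)).\<close>
definition rho :: "(nat \<Rightarrow> 'a) \<Rightarrow> (nat \<Rightarrow> 'a) \<Rightarrow> ereal" where
  "rho z y = (INF (C, r, l) \<in> {(C :: (nat, 'a) kaut, r, l). compressor C \<and> accepting_run 3 C r l
                 \<and> component l 0 = z \<and> component l 1 = y}. rho_run l)"

end

theory Submission
  imports Defs
begin

text \<open>With \<open>x\<close> as oracle, a compressor can recompute \<open>f(x)\<close> on its own by simulating the
  1-deterministic automaton realizing \<open>f\<close>: it reads \<open>x\<close> on the oracle tape, checks each letter of
  \<open>f(x)\<close> against the simulated output, and only needs to write every \<open>k\<close>-th letter of \<open>f(x)\<close> to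
  keep its output infinite. Injectivity for a fixed oracle holds because \<open>f\<close> is a function, and
  the compression ratio is at most \<open>2/k\<close> for every \<open>k > 0\<close>.\<close>

lemma length_2_conv_nth: "length xs = 2 \<Longrightarrow> xs = [xs ! 0, xs ! 1]"
  by (auto simp: numeral_2_eq_2 length_Suc_conv)

lemma run_label_2: "run_label 2 l = [component l 0, component l 1]"
  by (simp add: run_label_def numeral_2_eq_2)

lemma run_label_3: "run_label 3 l = [component l 0, component l 1, component l 2]"
  by (simp add: run_label_def numeral_3_eq_3 numeral_2_eq_2)

lemma enumerate_range_strict_mono:
  fixes g :: "nat \<Rightarrow> nat"
  assumes "strict_mono g"
  shows "enumerate (range g) n = g n"
proof -
  have inf: "infinite (range g)"
    using assms by (simp add: range_inj_infinite strict_mono_imp_inj_on)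
  show ?thesis
  proof (induction n)
    case 0
    show ?case unfolding enumerate_0
      by (rule Least_equality) (use assms in \<open>auto simp: strict_mono_less_eq\<close>)
  next
    case (Suc n)
    show ?case unfolding enumerate_Suc''[OF inf] Suc
      by (rule Least_equality)
        (use assms in \<open>auto simp: strict_mono_less strict_mono_less_eq Suc_le_eq\<close>)
  qed
qed

lemma enumerate_image_strict_mono:
  fixes h :: "nat \<Rightarrow> nat"
  assumes "strict_mono h" "infinite S"
  shows "enumerate (h ` S) n = h (enumerate S n)"
proof -
  have "h ` S = range (h \<circ> enumerate S)"
    using range_enumerate[OF assms(2)] by (metis image_comp)
  then show ?thesis
    using enumerate_range_strict_mono strict_mono_o[OF assms(1) strict_mono_enumerate[OF assms(2)]]
    by fastforce
qed

definition tape_spread ::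
    "(nat \<Rightarrow> nat) \<Rightarrow> (nat \<Rightarrow> 'a option list) \<Rightarrow> nat \<Rightarrow> (nat \<Rightarrow> 'a option list) \<Rightarrow> nat \<Rightarrow> bool" where
  "tape_spread h l' i l j \<longleftrightarrow> strict_mono h \<and> (\<forall>m. l' (h m) ! i = l m ! j) \<and>
     (\<forall>n. n \<notin> range h \<longrightarrow> l' n ! i = None)"

lemma tape_spread_positions:
  assumes "tape_spread h l' i l j"
  shows "{n. l' n ! i \<noteq> None} = h ` {m. l m ! j \<noteq> None}"
  using assms unfolding tape_spread_def by (auto simp: image_iff) (metis option.distinct(1))

lemma tape_spread_infinite_iff:
  assumes "tape_spread h l' i l j"
  shows "infinite {n. l' n ! i \<noteq> None} \<longleftrightarrow> infinite {m. l m ! j \<noteq> None}"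
  using assms unfolding tape_spread_positions[OF assms] tape_spread_def
  by (simp add: finite_image_iff strict_mono_imp_inj_on)

lemma tape_spread_component:
  assumes spread: "tape_spread h l' i l j" and inf: "infinite {m. l m ! j \<noteq> None}"
  shows "component l' i = component l j"
proof
  fix m
  have h: "strict_mono h" and copy: "l' (h k) ! i = l k ! j" for k
    using spread unfolding tape_spread_def by blast+
  have "component l' i m = the (l' (h (enumerate {m. l m ! j \<noteq> None} m)) ! i)"
    unfolding component_def tape_spread_positions[OF spread] enumerate_image_strict_mono[OF h inf] ..
  then show "component l' i m = component l j m"
    unfolding copy component_def .
qed

lemma tape_spread_even:
  assumes "\<And>m. l' (2 * m) ! i = l m ! j" and "\<And>m. l' (Suc (2 * m)) ! i = None"
  shows "tape_spread (\<lambda>m. 2 * m) l' i l j"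
  unfolding tape_spread_def strict_mono_def
proof (intro conjI allI impI)
  fix n :: nat
  assume "n \<notin> range (\<lambda>m. 2 * m)"
  then have "odd n" by (auto elim: evenE)
  then have "n = Suc (2 * (n div 2))" by presburger
  then show "l' n ! i = None" by (metis assms(2))
qed (use assms in auto)

lemma tape_spread_odd:
  assumes "\<And>m. l' (Suc (2 * m)) ! i = l m ! j" and "\<And>m. l' (2 * m) ! i = None"
  shows "tape_spread (\<lambda>m. Suc (2 * m)) l' i l j"
  unfolding tape_spread_def strict_mono_def
proof (intro conjI allI impI)
  fix n :: nat
  assume "n \<notin> range (\<lambda>m. Suc (2 * m))"
  then have "even n" by (metis oddE range_eqI plus_1_eq_Suc add.commute)
  then have "n = 2 * (n div 2)" by presburger
  then show "l' n ! i = None" by (metis assms(2))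
qed (use assms in auto)

lemma interleaved_tapes:
  assumes "tape_spread (\<lambda>m. 2 * m) l' 1 l 0" and "tape_spread (\<lambda>m. Suc (2 * m)) l' 0 l 1"
    and "infinite {n. l n ! 0 \<noteq> None}" and "infinite {n. l n ! 1 \<noteq> None}"
  shows "infinite {n. l' n ! 0 \<noteq> None}" and "infinite {n. l' n ! 1 \<noteq> None}"
    and "component l' 0 = component l 1" and "component l' 1 = component l 0"
  using assms tape_spread_infinite_iff tape_spread_component by blast+

definition tape_count :: "(nat \<Rightarrow> 'a option list) \<Rightarrow> nat \<Rightarrow> nat \<Rightarrow> nat" where
  "tape_count l i n = card {j. j < n \<and> l j ! i \<noteq> None}"

lemma tape_count_0 [simp]: "tape_count l i 0 = 0"
  unfolding tape_count_def by simp

lemma tape_count_Suc: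
  "tape_count l i (Suc n) = tape_count l i n + (if l n ! i = None then 0 else 1)"
proof -
  have "{j. j < Suc n \<and> l j ! i \<noteq> None} =
      {j. j < n \<and> l j ! i \<noteq> None} \<union> (if l n ! i = None then {} else {n})"
    by (auto simp: less_Suc_eq)
  then show ?thesis unfolding tape_count_def by auto
qed

lemma tape_count_mono: "m \<le> n \<Longrightarrow> tape_count l i m \<le> tape_count l i n"
  unfolding tape_count_def by (intro card_mono) auto

lemma infinite_positions_iff_tape_count_unbounded:
  "infinite {n. l n ! i \<noteq> None} \<longleftrightarrow> (\<forall>N. \<exists>n. N \<le> tape_count l i n)"
proof
  assume inf: "infinite {n. l n ! i \<noteq> None}"
  show "\<forall>N. \<exists>n. N \<le> tape_count l i n"
  proof
    fix N
    let ?S = "{n. l n ! i \<noteq> None}"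
    have "enumerate ?S ` {..<N} \<subseteq> {j. j < enumerate ?S N \<and> l j ! i \<noteq> None}"
      using enumerate_in_set[OF inf] enumerate_mono[OF _ inf] by auto
    then have "card (enumerate ?S ` {..<N}) \<le> tape_count l i (enumerate ?S N)"
      unfolding tape_count_def by (intro card_mono) auto
    moreover have "card (enumerate ?S ` {..<N}) = N"
      using inj_enumerate[OF inf] by (simp add: card_image inj_on_subset)
    ultimately have "N \<le> tape_count l i (enumerate ?S N)" by simp
    then show "\<exists>n. N \<le> tape_count l i n" ..
  qed
next
  assume unbounded: "\<forall>N. \<exists>n. N \<le> tape_count l i n"
  show "infinite {n. l n ! i \<noteq> None}"
  proof
    assume fin: "finite {n. l n ! i \<noteq> None}"
    obtain n where "Suc (card {n. l n ! i \<noteq> None}) \<le> tape_count l i n"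
      using unbounded by blast
    moreover have "tape_count l i n \<le> card {n. l n ! i \<noteq> None}"
      unfolding tape_count_def using fin by (intro card_mono) auto
    ultimately show False by simp
  qed
qed

definition map_states :: "('s \<Rightarrow> 't) \<Rightarrow> ('s, 'a) kaut \<Rightarrow> ('t, 'a) kaut" where
  "map_states h C = \<lparr>states = h ` states C, trans = (\<lambda>(p, \<alpha>, q). (h p, \<alpha>, h q)) ` trans C,
     init = h ` init C\<rparr>"

lemma trans_map_states_iff:
  "(p, \<alpha>, q) \<in> trans (map_states h C) \<longleftrightarrow>
     (\<exists>p' q'. (p', \<alpha>, q') \<in> trans C \<and> p = h p' \<and> q = h q')"
  unfolding map_states_def by force

lemma is_kaut_map_states: "is_kaut k C \<Longrightarrow> is_kaut k (map_states h C)"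
  unfolding is_kaut_def map_states_def by auto

lemma is_run_map_states: "is_run C r l \<Longrightarrow> is_run (map_states h C) (h \<circ> r) l"
  unfolding is_run_def map_states_def by (auto intro: rev_image_eqI)

lemma accepting_run_map_states:
  "accepting_run k C r l \<Longrightarrow> accepting_run k (map_states h C) (h \<circ> r) l"
  unfolding accepting_run_def using is_run_map_states by blast

lemma map_states_inv_into:
  assumes "is_kaut k C" and "inj_on h (states C)"
  shows "map_states (inv_into (states C) h) (map_states h C) = C"
proof -
  let ?g = "inv_into (states C) h"
  have gh: "?g (h s) = s" if "s \<in> states C" for s
    using assms(2) that by (rule inv_into_f_f)
  have "p \<in> states C \<and> q \<in> states C" if "(p, \<alpha>, q) \<in> trans C" for p \<alpha> q
    using assms(1) that unfolding is_kaut_def by auto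
  moreover have "init C \<subseteq> states C" using assms(1) unfolding is_kaut_def by blast
  ultimately have "(\<lambda>(p, \<alpha>, q). (?g p, \<alpha>, ?g q)) ` (\<lambda>(p, \<alpha>, q). (h p, \<alpha>, h q)) ` trans C = trans C"
    and "?g ` h ` init C = init C"
    using gh by (auto simp: image_iff subset_iff intro: rev_image_eqI)
  then show ?thesis
    unfolding map_states_def by (simp add: gh image_image cong: image_cong)
qed

lemma accepted_map_states:
  assumes "is_kaut k C" and "inj_on h (states C)"
  shows "accepted k (map_states h C) = accepted k C"
proof
  show "accepted k C \<subseteq> accepted k (map_states h C)"
    unfolding accepted_def using accepting_run_map_states by blast
  then have "accepted k (map_states h C) \<subseteq>
      accepted k (map_states (inv_into (states C) h) (map_states h C))"
    unfolding accepted_def using accepting_run_map_states by blast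
  then show "accepted k (map_states h C) \<subseteq> accepted k C"
    unfolding map_states_inv_into[OF assms] .
qed

lemma deterministic_map_states:
  assumes "is_kaut k C" and "inj_on h (states C)" and "deterministic m C"
  shows "deterministic m (map_states h C)"
proof -
  have "(\<forall>j<m. \<alpha> ! j = None \<longrightarrow> \<alpha>' ! j = None) \<and>
      ((\<forall>i<m. \<alpha> ! i = \<alpha>' ! i) \<longrightarrow> drop m \<alpha> = drop m \<alpha>' \<and> q = q')"
    if t: "(p, \<alpha>, q) \<in> trans (map_states h C)" and t': "(p, \<alpha>', q') \<in> trans (map_states h C)"
    for p \<alpha> q \<alpha>' q'
  proof -
    obtain p1 q1 where 1: "(p1, \<alpha>, q1) \<in> trans C" "p = h p1" "q = h q1"
      using t unfolding trans_map_states_iff by blast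
    obtain p2 q2 where 2: "(p2, \<alpha>', q2) \<in> trans C" "p = h p2" "q' = h q2"
      using t' unfolding trans_map_states_iff by blast
    have "p1 \<in> states C" "p2 \<in> states C"
      using 1(1) 2(1) assms(1) unfolding is_kaut_def by auto
    then have "p1 = p2" using 1(2) 2(2) assms(2) by (auto dest: inj_onD)
    then show ?thesis
      using 1 2 assms(3) unfolding deterministic_def by blast
  qed
  moreover have "\<exists>q0. init (map_states h C) = {q0}"
    using assms(3) unfolding deterministic_def map_states_def by auto
  ultimately show ?thesis unfolding deterministic_def by blast
qed

lemma compressor_map_states:
  assumes "is_kaut 3 C" and "deterministic 2 C" and "inj_on h (states C)"
    and "\<And>y z z' w. [z, y, w] \<in> accepted 3 C \<Longrightarrow> [z', y, w] \<in> accepted 3 C \<Longrightarrow> z = z'"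
  shows "compressor (map_states h C)"
  unfolding compressor_def accepted_map_states[OF assms(1,3)]
  using assms by (simp add: is_kaut_map_states deterministic_map_states)

section \<open>The oracle compressor\<close>

text \<open>Tape 0 carries the word \<open>z\<close> to be compressed, tape 1 the oracle \<open>y\<close>, tape 2 the output.
  From \<open>Inl (p, c)\<close> the compressor performs a transition of \<open>A\<close> from \<open>p\<close>, reading \<open>A\<close>'s input
  letter on the oracle tape, and remembers \<open>A\<close>'s output letter \<open>b\<close>; from \<open>Inr (q, b, c)\<close> it reads
  \<open>b\<close> on tape 0 and copies it to the output only if the counter \<open>c\<close>, the number of letters of
  \<open>z\<close> read so far modulo \<open>k\<close>, is zero.\<close>

definition oracle_compressor ::
    "('q, 'a) kaut \<Rightarrow> nat \<Rightarrow> (('q \<times> nat) + ('q \<times> 'a option \<times> nat), 'a) kaut" where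
  "oracle_compressor A k =
     \<lparr>states = Inl ` (states A \<times> {..<k}) \<union> Inr ` (states A \<times> UNIV \<times> {..<k}),
      trans = {(Inl (p, c), [None, \<alpha> ! 0, None], Inr (q, \<alpha> ! 1, c)) | p \<alpha> q c.
                 (p, \<alpha>, q) \<in> trans A \<and> c < k}
        \<union> {(Inr (q, b, c), [b, None, if c = 0 then b else None],
              Inl (q, if b = None then c else Suc c mod k)) | q b c. q \<in> states A \<and> c < k},
      init = Inl ` (init A \<times> {0})\<rparr>"

lemma oracle_compressor_trans_Inl:
  "(Inl (p, c), \<gamma>, s) \<in> trans (oracle_compressor A k) \<longleftrightarrow>
     (\<exists>\<alpha> q. (p, \<alpha>, q) \<in> trans A \<and> c < k \<and> \<gamma> = [None, \<alpha> ! 0, None] \<and> s = Inr (q, \<alpha> ! 1, c))"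
  unfolding oracle_compressor_def by auto

lemma oracle_compressor_trans_Inr:
  "(Inr (q, b, c), \<gamma>, s) \<in> trans (oracle_compressor A k) \<longleftrightarrow>
     q \<in> states A \<and> c < k \<and> \<gamma> = [b, None, if c = 0 then b else None] \<and>
     s = Inl (q, if b = None then c else Suc c mod k)"
  unfolding oracle_compressor_def by auto

lemma oracle_compressor_init: "init (oracle_compressor A k) = Inl ` (init A \<times> {0})"
  unfolding oracle_compressor_def by simp

lemma is_kaut_oracle_compressor:
  assumes "is_kaut 2 A" and "0 < k"
  shows "is_kaut 3 (oracle_compressor A k :: (_, 'a::finite) kaut)"
  using assms unfolding is_kaut_def oracle_compressor_def by auto

lemma deterministic_1_2_iff:
  assumes "is_kaut 2 A"
  shows "deterministic 1 A \<longleftrightarrow> (\<exists>q0. init A = {q0}) \<and>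
    (\<forall>p \<alpha> q \<alpha>' q'. (p, \<alpha>, q) \<in> trans A \<longrightarrow> (p, \<alpha>', q') \<in> trans A \<longrightarrow>
       (\<alpha> ! 0 = None \<longrightarrow> \<alpha>' ! 0 = None) \<and> (\<alpha> ! 0 = \<alpha>' ! 0 \<longrightarrow> \<alpha> ! 1 = \<alpha>' ! 1 \<and> q = q'))"
proof -
  have "drop 1 \<alpha> = [\<alpha> ! 1]" if "(p, \<alpha>, q) \<in> trans A" for p \<alpha> q
  proof -
    have "length \<alpha> = 2" using that assms unfolding is_kaut_def by auto
    then show ?thesis by (metis length_2_conv_nth drop0 drop_Suc_Cons One_nat_def)
  qed
  then show ?thesis
    unfolding deterministic_def by (auto simp: less_Suc_eq)
qed

lemma deterministic_oracle_compressor: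
  assumes "is_kaut 2 A" and "deterministic 1 A"
  shows "deterministic 2 (oracle_compressor A k)"
proof -
  note detA = assms(2)[unfolded deterministic_1_2_iff[OF assms(1)]]
  have "(\<forall>j<2. \<gamma> ! j = None \<longrightarrow> \<gamma>' ! j = None) \<and>
      ((\<forall>i<2. \<gamma> ! i = \<gamma>' ! i) \<longrightarrow> drop 2 \<gamma> = drop 2 \<gamma>' \<and> s = s')"
    if t: "(t, \<gamma>, s) \<in> trans (oracle_compressor A k)"
      and t': "(t, \<gamma>', s') \<in> trans (oracle_compressor A k)" for t \<gamma> s \<gamma>' s'
  proof (cases t)
    case (Inl pc)
    obtain p c where tpc: "t = Inl (p, c)" using Inl by (cases pc) auto
    obtain \<alpha> q \<alpha>' q' where
      \<alpha>: "(p, \<alpha>, q) \<in> trans A" "\<gamma> = [None, \<alpha> ! 0, None]" "s = Inr (q, \<alpha> ! 1, c)" and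
      \<alpha>': "(p, \<alpha>', q') \<in> trans A" "\<gamma>' = [None, \<alpha>' ! 0, None]" "s' = Inr (q', \<alpha>' ! 1, c)"
      using t t' unfolding tpc oracle_compressor_trans_Inl by blast
    have "\<alpha> ! 0 = None \<longrightarrow> \<alpha>' ! 0 = None" "\<alpha> ! 0 = \<alpha>' ! 0 \<longrightarrow> \<alpha> ! 1 = \<alpha>' ! 1 \<and> q = q'"
      using detA \<alpha>(1) \<alpha>'(1) by blast+
    then show ?thesis
      unfolding \<alpha> \<alpha>' by (auto simp: less_2_cases_iff)
  next
    case (Inr qbc)
    obtain q b c where tqbc: "t = Inr (q, b, c)" using Inr by (cases qbc) auto
    have "\<gamma> = \<gamma>'" "s = s'"
      using t t' unfolding tqbc oracle_compressor_trans_Inr by simp_all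
    then show ?thesis by simp
  qed
  then show ?thesis
    using detA unfolding deterministic_def oracle_compressor_init by blast
qed

definition counter :: "('q \<times> nat) + ('q \<times> 'a option \<times> nat) \<Rightarrow> nat" where
  "counter s = case_sum snd (snd \<circ> snd) s"

text \<open>The output is the first, \<open>(k+1)\<close>-st, \<open>(2k+1)\<close>-st, ... letter of \<open>z\<close>, so after \<open>n\<close> steps
  the output length is \<open>\<lceil>read/k\<rceil>\<close>, where \<open>read\<close> is the number of letters of \<open>z\<close> read.\<close>

lemma oracle_compressor_count_invariant:
  assumes run: "is_run (oracle_compressor A k) r l" and "0 < k"
  shows "counter (r n) < k \<and>
    k * tape_count l 2 n = tape_count l 0 n + (if counter (r n) = 0 then 0 else k - counter (r n))"
proof (induction n)
  case 0
  then show ?case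
    using assms unfolding is_run_def oracle_compressor_init counter_def by auto
next
  case (Suc n)
  have step: "(r n, l n, r (Suc n)) \<in> trans (oracle_compressor A k)"
    using run unfolding is_run_def by blast
  show ?case
  proof (cases "r n")
    case (Inl pc)
    then show ?thesis
      using step Suc by (cases pc) (auto simp: oracle_compressor_trans_Inl tape_count_Suc counter_def)
  next
    case (Inr qbc)
    then obtain q b c where rn: "r n = Inr (q, b, c)" by (cases qbc) auto
    then have "c < k" and "l n = [b, None, if c = 0 then b else None]"
      and "r (Suc n) = Inl (q, if b = None then c else Suc c mod k)"
      using step by (auto simp: oracle_compressor_trans_Inr)
    moreover have "Suc c < k \<or> Suc c = k" using \<open>c < k\<close> by auto
    ultimately show ?thesis
      using Suc rn by (cases b) (auto simp: tape_count_Suc counter_def algebra_simps)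
  qed
qed

lemma oracle_compressor_tape_count_bounds:
  assumes "is_run (oracle_compressor A k) r l" and "0 < k"
  shows "tape_count l 0 n \<le> k * tape_count l 2 n" and "k * tape_count l 2 n \<le> tape_count l 0 n + k"
  using oracle_compressor_count_invariant[OF assms, of n] by auto

lemma infinite_output_oracle_compressor:
  assumes "is_run (oracle_compressor A k) r l" and "0 < k"
    and "infinite {n. l n ! 0 \<noteq> None}"
  shows "infinite {n. l n ! 2 \<noteq> None}"
proof -
  have "\<exists>n. N \<le> tape_count l 2 n" for N
  proof -
    obtain n where "k * N \<le> tape_count l 0 n"
      using assms(3) unfolding infinite_positions_iff_tape_count_unbounded by blast
    then have "k * N \<le> k * tape_count l 2 n"
      using oracle_compressor_tape_count_bounds(1)[OF assms(1,2)] order_trans by blast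
    then show ?thesis using assms(2) by auto
  qed
  then show ?thesis unfolding infinite_positions_iff_tape_count_unbounded by blast
qed

lemma rho_run_oracle_compressor_le:
  assumes run: "is_run (oracle_compressor A k) r l" and k: "0 < k"
    and "infinite {n. l n ! 0 \<noteq> None}"
  shows "rho_run l \<le> ereal (2 / real k)"
proof -
  obtain n0 where n0: "k \<le> tape_count l 0 n0"
    using assms(3) unfolding infinite_positions_iff_tape_count_unbounded by blast
  have "ereal (real (tape_count l 2 n) / real (tape_count l 0 n)) \<le> ereal (2 / real k)"
    if "n0 \<le> n" for n
  proof -
    have read: "k \<le> tape_count l 0 n" using n0 tape_count_mono[OF that] by (rule order_trans)
    then have "k * tape_count l 2 n \<le> 2 * tape_count l 0 n"
      using oracle_compressor_tape_count_bounds(2)[OF run k] by (metis add_mono mult_2 order_trans order_refl)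
    then have "real k * real (tape_count l 2 n) \<le> 2 * real (tape_count l 0 n)"
      by (metis of_nat_le_iff of_nat_mult of_nat_numeral)
    with read k show ?thesis by (simp add: divide_simps mult.commute)
  qed
  then have "\<forall>\<^sub>F n in sequentially.
      ereal (real (tape_count l 2 n) / real (tape_count l 0 n)) \<le> ereal (2 / real k)"
    unfolding eventually_sequentially by blast
  then show ?thesis
    unfolding rho_run_def tape_count_def[symmetric] by (rule Liminf_le[rotated]) simp
qed

section \<open>Simulating the transducer\<close>

definition lift_run :: "nat \<Rightarrow> (nat \<Rightarrow> 'q) \<Rightarrow> (nat \<Rightarrow> 'a option list) \<Rightarrow>
    nat \<Rightarrow> ('q \<times> nat) + ('q \<times> 'a option \<times> nat)" where
  "lift_run k r l n = (let m = n div 2; c = tape_count l 1 m mod k in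
     if even n then Inl (r m, c) else Inr (r (Suc m), l m ! 1, c))"

definition lift_labels :: "nat \<Rightarrow> (nat \<Rightarrow> 'a option list) \<Rightarrow> nat \<Rightarrow> 'a option list" where
  "lift_labels k l n = (let m = n div 2 in
     if even n then [None, l m ! 0, None]
     else [l m ! 1, None, if tape_count l 1 m mod k = 0 then l m ! 1 else None])"

lemma is_run_lift:
  assumes "is_kaut 2 A" and run: "is_run A r l" and "0 < k"
  shows "is_run (oracle_compressor A k) (lift_run k r l) (lift_labels k l)"
  unfolding is_run_def
proof (intro conjI allI)
  show "lift_run k r l 0 \<in> init (oracle_compressor A k)"
    using run unfolding lift_run_def oracle_compressor_init is_run_def by auto
next
  fix n
  have "n = 2 * (n div 2) \<or> n = Suc (2 * (n div 2))" by presburger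
  then obtain m where "n = 2 * m \<or> n = Suc (2 * m)" by blast
  moreover have "(r m, l m, r (Suc m)) \<in> trans A" using run unfolding is_run_def by blast
  moreover from this have "r (Suc m) \<in> states A" using assms(1) unfolding is_kaut_def by auto
  ultimately show "(lift_run k r l n, lift_labels k l n, lift_run k r l (Suc n))
      \<in> trans (oracle_compressor A k)"
    using \<open>0 < k\<close> unfolding lift_run_def lift_labels_def
    by (auto simp: oracle_compressor_trans_Inl oracle_compressor_trans_Inr tape_count_Suc mod_Suc_eq)
qed

lemma tape_spread_lift_labels:
  "tape_spread (\<lambda>m. 2 * m) (lift_labels k l) 1 l 0"
  "tape_spread (\<lambda>m. Suc (2 * m)) (lift_labels k l) 0 l 1"
  by (auto intro!: tape_spread_even tape_spread_odd simp: lift_labels_def)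

lemma oracle_compressor_double_step:
  assumes run: "is_run (oracle_compressor A k) r l" and "r (2 * m) = Inl (p, c)"
  shows "\<exists>\<alpha> q c'. (p, \<alpha>, q) \<in> trans A \<and> l (2 * m) = [None, \<alpha> ! 0, None] \<and>
    l (Suc (2 * m)) ! 0 = \<alpha> ! 1 \<and> l (Suc (2 * m)) ! 1 = None \<and> r (2 * Suc m) = Inl (q, c')"
proof -
  have "(r n, l n, r (Suc n)) \<in> trans (oracle_compressor A k)" for n
    using run unfolding is_run_def by blast
  from this[of "2 * m"] this[of "Suc (2 * m)"] show ?thesis
    using assms(2) by (auto simp: oracle_compressor_trans_Inl oracle_compressor_trans_Inr)
qed

lemma oracle_compressor_run_even:
  assumes "is_run (oracle_compressor A k) r l"
  shows "\<exists>p c. r (2 * m) = Inl (p, c)"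
proof (induction m)
  case 0
  then show ?case using assms unfolding is_run_def oracle_compressor_init by auto
next
  case (Suc m)
  then show ?case using oracle_compressor_double_step[OF assms] by blast
qed

definition project_labels :: "(nat \<Rightarrow> 'a option list) \<Rightarrow> nat \<Rightarrow> 'a option list" where
  "project_labels l m = [l (2 * m) ! 1, l (Suc (2 * m)) ! 0]"

lemma is_run_project:
  assumes "is_kaut 2 A" and run: "is_run (oracle_compressor A k) r l"
  shows "is_run A (\<lambda>m. fst (projl (r (2 * m)))) (project_labels l)"
    and "tape_spread (\<lambda>m. 2 * m) l 1 (project_labels l) 0"
    and "tape_spread (\<lambda>m. Suc (2 * m)) l 0 (project_labels l) 1"
proof -
  have step: "(fst (projl (r (2 * m))), project_labels l m, fst (projl (r (2 * Suc m)))) \<in> trans A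
      \<and> l (2 * m) ! 0 = None \<and> l (Suc (2 * m)) ! 1 = None" for m
  proof -
    obtain p c where pc: "r (2 * m) = Inl (p, c)" using oracle_compressor_run_even[OF run] by blast
    then obtain \<alpha> q c' where \<alpha>: "(p, \<alpha>, q) \<in> trans A" "l (2 * m) = [None, \<alpha> ! 0, None]"
      "l (Suc (2 * m)) ! 0 = \<alpha> ! 1" "l (Suc (2 * m)) ! 1 = None" "r (2 * Suc m) = Inl (q, c')"
      using oracle_compressor_double_step[OF run] by blast
    have "length \<alpha> = 2" using \<alpha>(1) assms(1) unfolding is_kaut_def by auto
    then have "project_labels l m = \<alpha>"
      using \<alpha> length_2_conv_nth unfolding project_labels_def by force
    then show ?thesis using \<alpha> pc by simp
  qed
  show "is_run A (\<lambda>m. fst (projl (r (2 * m)))) (project_labels l)"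
    using step run unfolding is_run_def oracle_compressor_init by auto
  show "tape_spread (\<lambda>m. 2 * m) l 1 (project_labels l) 0"
    using step by (intro tape_spread_even) (simp_all add: project_labels_def)
  show "tape_spread (\<lambda>m. Suc (2 * m)) l 0 (project_labels l) 1"
    using step by (intro tape_spread_odd) (simp_all add: project_labels_def)
qed

lemma accepted_oracle_compressorD:
  assumes "is_kaut 2 A" and "[z, y, w] \<in> accepted 3 (oracle_compressor A k)"
  shows "[y, z] \<in> accepted 2 A"
proof -
  obtain r l where acc: "accepting_run 3 (oracle_compressor A k) r l"
    and zyw: "[z, y, w] = run_label 3 l"
    using assms(2) unfolding accepted_def by blast
  have run: "is_run (oracle_compressor A k) r l" and
    "infinite {n. l n ! 0 \<noteq> None}" "infinite {n. l n ! 1 \<noteq> None}"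
    using acc unfolding accepting_run_def by auto
  with is_run_project[OF assms(1) run] have
    "infinite {m. project_labels l m ! 0 \<noteq> None}" "infinite {m. project_labels l m ! 1 \<noteq> None}"
    using tape_spread_infinite_iff by blast+
  note interleaved = interleaved_tapes[OF is_run_project(2,3)[OF assms(1) run] this]
  have "accepting_run 2 A (\<lambda>m. fst (projl (r (2 * m)))) (project_labels l)"
    unfolding accepting_run_def
    using is_run_project(1)[OF assms(1) run] \<open>infinite {m. project_labels l m ! 0 \<noteq> None}\<close>
      \<open>infinite {m. project_labels l m ! 1 \<noteq> None}\<close> by (auto simp: less_2_cases_iff)
  moreover have "[y, z] = run_label 2 (project_labels l)"
    using zyw interleaved(3,4) by (simp add: run_label_2 run_label_3)
  ultimately show ?thesis unfolding accepted_def by blast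
qed

lemma rho_component_le_div:
  fixes A :: "('q, 'a::finite) kaut"
  assumes kA: "is_kaut 2 A" and dA: "deterministic 1 A" and real: "realizes_1_2 A f"
    and acc: "accepting_run 2 A r l" and k: "0 < k"
  shows "rho (component l 1) (component l 0) \<le> ereal (2 / real k)"
proof -
  let ?C = "oracle_compressor A k :: (_, 'a) kaut"
  have kC: "is_kaut 3 ?C" by (rule is_kaut_oracle_compressor[OF kA k])
  then have "finite (states ?C)" unfolding is_kaut_def by blast
  then obtain h :: "_ \<Rightarrow> nat" where h: "inj_on h (states ?C)"
    by (meson finite_imp_inj_to_nat_seg)
  have "compressor (map_states h ?C)"
  proof (rule compressor_map_states[OF kC deterministic_oracle_compressor[OF kA dA] h])
    fix y z z' w
    assume "[z, y, w] \<in> accepted 3 ?C" "[z', y, w] \<in> accepted 3 ?C"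
    then have "[y, z] \<in> accepted 2 A" "[y, z'] \<in> accepted 2 A"
      using accepted_oracle_compressorD[OF kA] by blast+
    then have "f y = Some z" "f y = Some z'"
      using real unfolding realizes_1_2_def by blast+
    then show "z = z'" by simp
  qed
  have run: "is_run ?C (lift_run k r l) (lift_labels k l)"
    using is_run_lift[OF kA _ k] acc unfolding accepting_run_def by blast
  have "infinite {n. l n ! 0 \<noteq> None}" "infinite {n. l n ! 1 \<noteq> None}"
    using acc unfolding accepting_run_def by auto
  note interleaved = interleaved_tapes[OF tape_spread_lift_labels this]
  have "infinite {n. lift_labels k l n ! 2 \<noteq> None}"
    by (rule infinite_output_oracle_compressor[OF run k interleaved(1)])
  with interleaved(1,2) have "infinite {n. lift_labels k l n ! i \<noteq> None}" if "i < 3" for i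
    using that by (auto simp: numeral_3_eq_3 numeral_2_eq_2 less_Suc_eq)
  then have "accepting_run 3 (map_states h ?C) (h \<circ> lift_run k r l) (lift_labels k l)"
    using accepting_run_map_states run unfolding accepting_run_def by blast
  with \<open>compressor (map_states h ?C)\<close> interleaved(3,4)
  have "rho (component l 1) (component l 0) \<le> rho_run (lift_labels k l)"
    unfolding rho_def by (intro INF_lower2[of "(map_states h ?C, h \<circ> lift_run k r l, lift_labels k l)"]) auto
  also have "\<dots> \<le> ereal (2 / real k)"
    by (rule rho_run_oracle_compressor_le[OF run k interleaved(1)])
  finally show ?thesis .
qed

lemma rho_nonneg: "0 \<le> rho z y"
  unfolding rho_def rho_run_def by (rule INF_greatest) (auto intro: Liminf_bounded)

lemma ereal_nonpos_if_le_div_nat: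
  fixes x :: ereal
  assumes "\<And>k. 0 < k \<Longrightarrow> x \<le> ereal (c / real k)"
  shows "x \<le> 0"
proof (rule ereal_le_epsilon2)
  fix e :: real
  assume "0 < e"
  obtain k :: nat where k: "max 0 (c / e) < real k" using reals_Archimedean2 by blast
  then have "0 < k" by simp
  moreover have "c < e * real k" using k \<open>0 < e\<close> by (simp add: pos_divide_less_eq mult.commute)
  then have "c / real k \<le> e" using \<open>0 < k\<close> by (simp add: pos_divide_le_eq)
  ultimately show "x \<le> 0 + ereal e"
    using assms[of k] by (simp add: order_trans)
qed

theorem proposition3:
  fixes f :: "(nat \<Rightarrow> 'a::finite) \<Rightarrow> (nat \<Rightarrow> 'a) option"
    and A :: "('q, 'a) kaut"
    and x :: "nat \<Rightarrow> 'a"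
  assumes "is_kaut 2 A" and "deterministic 1 A" and "realizes_1_2 A f"
    and "x \<in> dom f"
  shows "rho (the (f x)) x = 0"
proof -
  obtain z where "f x = Some z" using assms(4) by auto
  then obtain r l where acc: "accepting_run 2 A r l" and "[x, z] = run_label 2 l"
    using assms(3) unfolding realizes_1_2_def accepted_def by blast
  then have "x = component l 0" "the (f x) = component l 1"
    using \<open>f x = Some z\<close> by (simp_all add: run_label_2)
  then have "rho (the (f x)) x \<le> ereal (2 / real k)" if "0 < k" for k
    using rho_component_le_div[OF assms(1-3) acc that] by simp
  then have "rho (the (f x)) x \<le> 0"
    by (rule ereal_nonpos_if_le_div_nat)
  then show ?thesis using rho_nonneg by (rule antisym)
qed

end
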